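(* Let $M'=M[D,K]$ be a compatible minor of the weighted uncertainty matroid $\mathcal{M}$. If there is a circuit $C$ of $M'$ containing an element $e$ that has the unique maximum weight in $C$, then $M[D\cup\{e\},K]$ is a compatible minor of $\mathcal{M}$.
   Context: A weighted uncertainty matroid $\mathcal{M}=(E,\mathcal{I},A,w)$ consists of a matroid $M=(E,\mathcal{I})$ on a finite set $E$, for each $e\in E$ a non-empty finite union $A_e$ of bounded real intervals (each open or closed), a weight $w_e\in A_e$, and a query cost $c_e\ge0$. A minimum-weight basis (MWB) is a basis minimizing total weight. A weight assignment is $w^*$ with $w^*_e\in A_e$, consistent with $Q$ if $w^*_e=w_e$ on $Q$. $Q$ verifies an MWB $B$ if for every weight assignment consistent with $Q$, $B$ is an MWB with respect to it; a certificate for $\mathcal{M}$ is a set verifying some MWB, and $c^*$ denotes the minimum cost $\sum_{e\in Q}c_e$ of a certificate for $\mathcal{M}$. For $D,K\subseteq E$, $M[D,K]$ is the matroid obtained from $M$ by deleting $D$ and contracting $K$, with weights restricted to its ground set $E(M[D,K])=E\setminus(D\cup K)$. $M[D,K]$ is a compatible minor of $\mathcal{M}$ if there is a set $Q$ of cost $c^*$ that verifies an MWB $B$ of $\mathcal{M}$ with $K\subseteq B$ and $D\cap B=\emptyset$. *)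

theory Defs
  imports Complex_Main
begin

definition matroid :: "'a set \<Rightarrow> ('a set \<Rightarrow> bool) \<Rightarrow> bool" where
  "matroid E indep \<longleftrightarrow>
     finite E \<and>
     (\<forall>I. indep I \<longrightarrow> I \<subseteq> E) \<and>
     indep {} \<and>
     (\<forall>I J. indep J \<and> I \<subseteq> J \<longrightarrow> indep I) \<and>
     (\<forall>I J. indep I \<and> indep J \<and> card I < card J \<longrightarrow>
        (\<exists>x\<in>J - I. indep (insert x I)))"

definition basis :: "'a set \<Rightarrow> ('a set \<Rightarrow> bool) \<Rightarrow> 'a set \<Rightarrow> bool" where
  "basis E indep B \<longleftrightarrow> B \<subseteq> E \<and> indep B \<and>
     (\<forall>X. B \<subset> X \<and> X \<subseteq> E \<longrightarrow> \<not> indep X)"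

definition circuit :: "'a set \<Rightarrow> ('a set \<Rightarrow> bool) \<Rightarrow> 'a set \<Rightarrow> bool" where
  "circuit E indep C \<longleftrightarrow> C \<subseteq> E \<and> \<not> indep C \<and> (\<forall>X. X \<subset> C \<longrightarrow> indep X)"

text \<open>Minor M[D,K]: delete D, then contract K.\<close>
definition minor_ground :: "'a set \<Rightarrow> 'a set \<Rightarrow> 'a set \<Rightarrow> 'a set" where
  "minor_ground E D K = E - (D \<union> K)"

definition minor_indep ::
  "'a set \<Rightarrow> ('a set \<Rightarrow> bool) \<Rightarrow> 'a set \<Rightarrow> 'a set \<Rightarrow> 'a set \<Rightarrow> bool" where
  "minor_indep E indep D K I \<longleftrightarrow> I \<subseteq> E - (D \<union> K) \<and>
     (\<exists>J. basis ((K \<inter> E) - D) indep J \<and> indep (I \<union> J))"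

definition uncertainty_area :: "real set \<Rightarrow> bool" where
  "uncertainty_area S \<longleftrightarrow> S \<noteq> {} \<and>
     (\<exists>F. finite F \<and> S = \<Union>F \<and> (\<forall>J\<in>F. \<exists>a b. J = {a..b} \<or> J = {a<..<b}))"

definition uncertainty_matroid ::
  "'a set \<Rightarrow> ('a set \<Rightarrow> bool) \<Rightarrow> ('a \<Rightarrow> real set) \<Rightarrow> ('a \<Rightarrow> real) \<Rightarrow> ('a \<Rightarrow> real) \<Rightarrow> bool" where
  "uncertainty_matroid E indep A w c \<longleftrightarrow> matroid E indep \<and>
     (\<forall>e\<in>E. uncertainty_area (A e) \<and> w e \<in> A e \<and> c e \<ge> 0)"

definition mwb :: "'a set \<Rightarrow> ('a set \<Rightarrow> bool) \<Rightarrow> ('a \<Rightarrow> real) \<Rightarrow> 'a set \<Rightarrow> bool" where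
  "mwb E indep w B \<longleftrightarrow> basis E indep B \<and>
     (\<forall>B'. basis E indep B' \<longrightarrow> sum w B \<le> sum w B')"

definition weight_assignment :: "'a set \<Rightarrow> ('a \<Rightarrow> real set) \<Rightarrow> ('a \<Rightarrow> real) \<Rightarrow> bool" where
  "weight_assignment E A w' \<longleftrightarrow> (\<forall>e\<in>E. w' e \<in> A e)"

definition consistent :: "'a set \<Rightarrow> ('a \<Rightarrow> real) \<Rightarrow> ('a \<Rightarrow> real) \<Rightarrow> bool" where
  "consistent Q w w' \<longleftrightarrow> (\<forall>e\<in>Q. w' e = w e)"

definition verifies ::
  "'a set \<Rightarrow> ('a set \<Rightarrow> bool) \<Rightarrow> ('a \<Rightarrow> real set) \<Rightarrow> ('a \<Rightarrow> real) \<Rightarrow> 'a set \<Rightarrow> 'a set \<Rightarrow> bool" where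
  "verifies E indep A w Q B \<longleftrightarrow>
     (\<forall>w'. weight_assignment E A w' \<and> consistent Q w w' \<longrightarrow> mwb E indep w' B)"

definition certificate ::
  "'a set \<Rightarrow> ('a set \<Rightarrow> bool) \<Rightarrow> ('a \<Rightarrow> real set) \<Rightarrow> ('a \<Rightarrow> real) \<Rightarrow> 'a set \<Rightarrow> bool" where
  "certificate E indep A w Q \<longleftrightarrow> Q \<subseteq> E \<and>
     (\<exists>B. mwb E indep w B \<and> verifies E indep A w Q B)"

definition opt_cost ::
  "'a set \<Rightarrow> ('a set \<Rightarrow> bool) \<Rightarrow> ('a \<Rightarrow> real set) \<Rightarrow> ('a \<Rightarrow> real) \<Rightarrow> ('a \<Rightarrow> real) \<Rightarrow> real" where
  "opt_cost E indep A w c = Min {sum c Q | Q. certificate E indep A w Q}"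

definition compatible_minor ::
  "'a set \<Rightarrow> ('a set \<Rightarrow> bool) \<Rightarrow> ('a \<Rightarrow> real set) \<Rightarrow> ('a \<Rightarrow> real) \<Rightarrow> ('a \<Rightarrow> real)
     \<Rightarrow> 'a set \<Rightarrow> 'a set \<Rightarrow> bool" where
  "compatible_minor E indep A w c D K \<longleftrightarrow>
     (\<exists>Q B. Q \<subseteq> E \<and> sum c Q = opt_cost E indep A w c \<and>
        mwb E indep w B \<and> verifies E indep A w Q B \<and> K \<subseteq> B \<and> D \<inter> B = {})"

end

theory Submission
  imports Defs
begin

text \<open>Let B be the minimum-weight basis verified by an optimal certificate with
  K \<subseteq> B and D \<inter> B = {}. Since K is independent, contracting K simply adds K
  to every set, so (C - {e}) \<union> K is independent and adding e makes it
  dependent. If B contained e, extending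
  (C - {e}) \<union> K inside (C - {e}) \<union> K \<union> B and augmenting
  B - {e} from it would exchange e for some x \<in> C - {e},
  giving a basis of smaller weight. Hence e \<notin> B, and the certificate
  witnessing compatibility of M[D,K] also witnesses that of
  M[D \<union> {e},K].\<close>

lemma matroid_indep_subset: "matroid E indep \<Longrightarrow> indep I \<Longrightarrow> I \<subseteq> E"
  unfolding matroid_def by blast

lemma matroid_indep_finite: "matroid E indep \<Longrightarrow> indep I \<Longrightarrow> finite I"
  unfolding matroid_def by (meson finite_subset)

lemma matroid_indep_mono: "matroid E indep \<Longrightarrow> indep J \<Longrightarrow> I \<subseteq> J \<Longrightarrow> indep I"
  unfolding matroid_def by blast

lemma matroid_augment:
  "matroid E indep \<Longrightarrow> indep I \<Longrightarrow> indep J \<Longrightarrow> card I < card J \<Longrightarrow>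
     \<exists>x\<in>J - I. indep (insert x I)"
  unfolding matroid_def by blast

lemma matroid_augment_to_card:
  assumes m: "matroid E indep" and "indep I" and "indep J"
  shows "\<exists>X. I \<subseteq> X \<and> X \<subseteq> I \<union> J \<and> indep X \<and> card J \<le> card X"
  using assms(2)
proof (induction "card J - card I" arbitrary: I rule: less_induct)
  case (less I)
  show ?case
  proof (cases "card I < card J")
    case True
    then obtain x where x: "x \<in> J - I" "indep (insert x I)"
      using matroid_augment[OF m less.prems assms(3)] by blast
    have "card (insert x I) = Suc (card I)"
      using x(1) matroid_indep_finite[OF m less.prems] by simp
    then have "card J - card (insert x I) < card J - card I"
      using True by simp
    then obtain X where "insert x I \<subseteq> X" "X \<subseteq> insert x I \<union> J" "indep X" "card J \<le> card X"
      using less.hyps x(2) by blast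
    then show ?thesis using x(1) by blast
  next
    case False
    then show ?thesis using less.prems by (intro exI[of _ I]) auto
  qed
qed

lemma basis_if_indep_card_ge:
  assumes m: "matroid E indep" and B: "basis E indep B"
    and "indep B'" and "card B \<le> card B'"
  shows "basis E indep B'"
  unfolding basis_def
proof (intro conjI allI impI notI)
  show "B' \<subseteq> E" using matroid_indep_subset[OF m \<open>indep B'\<close>] .
  show "indep B'" by fact
  fix Y assume Y: "B' \<subset> Y \<and> Y \<subseteq> E" and "indep Y"
  have "card B' < card Y"
    using Y psubset_card_mono matroid_indep_finite[OF m \<open>indep Y\<close>] by blast
  moreover have "indep B" using B unfolding basis_def by blast
  ultimately obtain z where "z \<in> Y - B" "indep (insert z B)"
    using matroid_augment[OF m _ \<open>indep Y\<close>] assms(4) by (meson order_le_less_trans)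
  moreover have "insert z B \<subseteq> E" using matroid_indep_subset[OF m] calculation(2) .
  ultimately show False
    using B unfolding basis_def by blast
qed

lemma basis_of_indep_iff: "indep K \<Longrightarrow> basis K indep J \<longleftrightarrow> J = K"
  unfolding basis_def by blast

lemma minor_indep_contract_indep:
  assumes "indep K" and "K \<subseteq> E" and "D \<inter> K = {}"
  shows "minor_indep E indep D K I \<longleftrightarrow> I \<subseteq> E - (D \<union> K) \<and> indep (I \<union> K)"
proof -
  have "(K \<inter> E) - D = K" using assms(2,3) by blast
  then show ?thesis
    unfolding minor_indep_def using basis_of_indep_iff[of indep K] assms(1) by simp
qed

lemma circuit_minor_contract_indep:
  assumes "indep K" and "K \<subseteq> E" and "D \<inter> K = {}"
    and "circuit (minor_ground E D K) (minor_indep E indep D K) C" and "e \<in> C"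
  shows "indep ((C - {e}) \<union> K)" and "\<not> indep (insert e ((C - {e}) \<union> K))"
proof -
  note minor = minor_indep_contract_indep[of indep K, OF assms(1-3)]
  have "C \<subseteq> E - (D \<union> K)" "\<not> minor_indep E indep D K C"
    "minor_indep E indep D K (C - {e})"
    using assms(4,5) unfolding circuit_def minor_ground_def by auto
  moreover have "insert e ((C - {e}) \<union> K) = C \<union> K" using assms(5) by blast
  ultimately show "indep ((C - {e}) \<union> K)" "\<not> indep (insert e ((C - {e}) \<union> K))"
    unfolding minor by auto
qed

lemma basis_exchange_into_indep:
  assumes m: "matroid E indep" and B: "basis E indep B" and "e \<in> B"
    and I: "indep I" and dep: "\<not> indep (insert e I)"
  shows "\<exists>x\<in>I - B. basis E indep (insert x (B - {e}))"
proof -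
  have iB: "indep B" and finB: "finite B"
    using B matroid_indep_finite[OF m] unfolding basis_def by auto
  obtain X where X: "I \<subseteq> X" "X \<subseteq> I \<union> B" "indep X" "card B \<le> card X"
    using matroid_augment_to_card[OF m I iB] by blast
  have "e \<notin> X"
    using X(1,3) dep matroid_indep_mono[OF m] by (meson insert_subsetI)
  have iBe: "indep (B - {e})" using matroid_indep_mono[OF m iB] by blast
  have cBe: "card (B - {e}) < card B" using finB \<open>e \<in> B\<close> by (meson card_Diff1_less)
  obtain x where x: "x \<in> X - (B - {e})" "indep (insert x (B - {e}))"
    using matroid_augment[OF m iBe X(3)] cBe X(4) by fastforce
  have "x \<in> I - B" using x(1) X(2) \<open>e \<notin> X\<close> by blast
  moreover have "card (insert x (B - {e})) = card B"
    using calculation finB \<open>e \<in> B\<close>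
    by (metis DiffD2 DiffE card_Suc_Diff1 card_insert_disjoint finite_Diff)
  ultimately show ?thesis
    using basis_if_indep_card_ge[OF m B x(2)] by auto
qed

lemma mwb_exchange_weight_le:
  assumes m: "matroid E indep" and B: "mwb E indep w B" and "e \<in> B"
    and "indep I" and "\<not> indep (insert e I)"
  shows "\<exists>x\<in>I - B. w e \<le> w x"
proof -
  have "basis E indep B" "finite B"
    using B matroid_indep_finite[OF m] unfolding mwb_def basis_def by auto
  then obtain x where x: "x \<in> I - B" "basis E indep (insert x (B - {e}))"
    using basis_exchange_into_indep[OF m _ assms(3-5)] by blast
  have "sum w (insert x (B - {e})) = w x + (sum w B - w e)"
    using x(1) \<open>finite B\<close> \<open>e \<in> B\<close> by (simp add: sum_diff1)
  moreover have "sum w B \<le> sum w (insert x (B - {e}))"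
    using B x(2) unfolding mwb_def by blast
  ultimately show ?thesis using x(1) by auto
qed

theorem mainTheorem9:
  fixes E :: "'a set" and indep :: "'a set \<Rightarrow> bool" and A :: "'a \<Rightarrow> real set"
    and w c :: "'a \<Rightarrow> real" and D K C :: "'a set" and e :: 'a
  assumes "uncertainty_matroid E indep A w c"
    and "compatible_minor E indep A w c D K"
    and "circuit (minor_ground E D K) (minor_indep E indep D K) C"
    and "e \<in> C"
    and "\<forall>f\<in>C - {e}. w f < w e"
  shows "compatible_minor E indep A w c (D \<union> {e}) K"
proof -
  have m: "matroid E indep" using assms(1) unfolding uncertainty_matroid_def by blast
  obtain Q B where QB: "Q \<subseteq> E" "sum c Q = opt_cost E indep A w c"
     "mwb E indep w B" "verifies E indep A w Q B" "K \<subseteq> B" "D \<inter> B = {}"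
    using assms(2) unfolding compatible_minor_def by blast
  have "indep B" "B \<subseteq> E" using QB(3) unfolding mwb_def basis_def by auto
  then have "indep K" "K \<subseteq> E" "D \<inter> K = {}"
    using matroid_indep_mono[OF m _ QB(5)] QB(5,6) by auto
  note C = circuit_minor_contract_indep[OF this assms(3,4)]
  have "e \<notin> B"
  proof
    assume "e \<in> B"
    then obtain x where x: "x \<in> (C - {e}) \<union> K - B" "w e \<le> w x"
      using mwb_exchange_weight_le[OF m QB(3) _ C] by blast
    then have "x \<in> C - {e}" using QB(5) by blast
    then have "w x < w e" using assms(5) by blast
    then show False using x(2) by linarith
  qed
  then show ?thesis unfolding compatible_minor_def using QB by blast
qed

end
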